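(* Let $\sigma,\zeta,\wp$ be the Weierstrass functions with invariants $g_2,g_3$, let $v$ be a point which is not a pole of $\wp$, and let $\psi(u,v)=\ln\sigma(v)-\ln\sigma(v-u)-\zeta(v)u$ (the branch vanishing at $u=0$). Then there are polynomials $P_k\in\mathbb{Z}[x_2,x_3,x_4]$, independent of $v,g_2,g_3$, such that near $u=0$ \[ \psi(u,v)=\sum_{k\ge2}P_k(a_2,a_3,a_4)\frac{u^k}{k!},\qquad a_2=\wp(v),\ a_3=\wp'(v),\ a_4=\tfrac12g_2; \] i.e. $\psi(u,v)$ is a Hurwitz series over $\mathbb{Z}[a_2,a_3,a_4]$.
   Context: $\wp(u)=\wp(u;g_2,g_3)$ is the Weierstrass function ($\wp'^2=4\wp^3-g_2\wp-g_3$, $\wp=u^{-2}+O(u^2)$), $\sigma$ the Weierstrass sigma function (entire, odd, $\sigma(u)=u+O(u^5)$), $\zeta=\sigma'/\sigma$, $\wp=-\zeta'$. A Hurwitz series over a ring $A$ is a series $\sum_k\varphi_ku^k/k!$ with all $\varphi_k\in A$. *)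

theory Defs
  imports "HOL-Complex_Analysis.Complex_Analysis" "HOL-Library.Landau_Symbols"
begin

definition wzeta :: "(complex \<Rightarrow> complex) \<Rightarrow> complex \<Rightarrow> complex" where
  "wzeta \<sigma> u = deriv \<sigma> u / \<sigma> u"

definition wp :: "(complex \<Rightarrow> complex) \<Rightarrow> complex \<Rightarrow> complex" where
  "wp \<sigma> u = - deriv (wzeta \<sigma>) u"

text \<open>These conditions determine sigma uniquely.\<close>
definition weierstrass_sigma :: "complex \<Rightarrow> complex \<Rightarrow> (complex \<Rightarrow> complex) \<Rightarrow> bool" where
  "weierstrass_sigma g2 g3 \<sigma> \<longleftrightarrow>
     \<sigma> holomorphic_on UNIV \<and>
     (\<forall>u. \<sigma> (-u) = - \<sigma> u) \<and>
     (\<lambda>u. \<sigma> u - u) \<in> O[at 0](\<lambda>u. u ^ 5) \<and>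
     (\<forall>u. \<sigma> u \<noteq> 0 \<longrightarrow>
        (deriv (wp \<sigma>) u)\<^sup>2 = 4 * (wp \<sigma> u) ^ 3 - g2 * wp \<sigma> u - g3)"

text \<open>Integer polynomials in three variables, as finitely supported coefficient
  maps on exponent triples, and their evaluation.\<close>
definition int_mpoly3 :: "(nat \<times> nat \<times> nat \<Rightarrow> int) \<Rightarrow> bool" where
  "int_mpoly3 c \<longleftrightarrow> finite {e. c e \<noteq> 0}"

definition eval_mpoly3 :: "(nat \<times> nat \<times> nat \<Rightarrow> int) \<Rightarrow> complex \<Rightarrow> complex \<Rightarrow> complex \<Rightarrow> complex" where
  "eval_mpoly3 c x y z =
     (\<Sum>e\<in>{e. c e \<noteq> 0}. of_int (c e) * x ^ fst e * y ^ fst (snd e) * z ^ snd (snd e))"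

definition wpsi :: "(complex \<Rightarrow> complex) \<Rightarrow> complex \<Rightarrow> complex \<Rightarrow> complex" where
  "wpsi \<sigma> u v = - Ln (\<sigma> (v - u) / \<sigma> v) - wzeta \<sigma> v * u"

end

theory Submission
  imports Defs
begin

text \<open>Since \<open>\<psi>(0) = \<psi>'(0) = 0\<close> and \<open>\<psi>''(u) = \<wp>(v - u)\<close>, the Taylor coefficients
  of \<open>\<psi>\<close> at \<open>0\<close> are \<open>(-1)\<^sup>k \<wp>\<^sup>(\<^sup>k\<^sup>)(v)\<close>. Differentiating
  \<open>\<wp>'\<^sup>2 = 4\<wp>\<^sup>3 - g\<^sub>2\<wp> - g\<^sub>3\<close> gives \<open>\<wp>'' = 6\<wp>\<^sup>2 - g\<^sub>2/2\<close>, so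
  \<open>\<wp>\<^sup>(\<^sup>k\<^sup>) = D\<^sup>k(x\<^sub>2)\<close> evaluated at \<open>(\<wp>, \<wp>', g\<^sub>2/2)\<close>, where \<open>D\<close> is the
  derivation of \<open>\<int>[x\<^sub>2, x\<^sub>3, x\<^sub>4]\<close> with \<open>D x\<^sub>2 = x\<^sub>3\<close>, \<open>D x\<^sub>3 = 6x\<^sub>2\<^sup>2 - x\<^sub>4\<close>,
  \<open>D x\<^sub>4 = 0\<close>.\<close>

type_synonym monomial3 = "int \<times> nat \<times> nat \<times> nat"

fun eval_monomial :: "monomial3 \<Rightarrow> complex \<Rightarrow> complex \<Rightarrow> complex \<Rightarrow> complex" where
  "eval_monomial (a, i, j, k) x y z = of_int a * x ^ i * y ^ j * z ^ k"

definition eval_monomials :: "monomial3 list \<Rightarrow> complex \<Rightarrow> complex \<Rightarrow> complex \<Rightarrow> complex" where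
  "eval_monomials ms x y z = (\<Sum>m\<leftarrow>ms. eval_monomial m x y z)"

definition coeffs_of_monomials :: "monomial3 list \<Rightarrow> nat \<times> nat \<times> nat \<Rightarrow> int" where
  "coeffs_of_monomials ms e = (\<Sum>m\<leftarrow>ms. if snd m = e then fst m else 0)"

definition scale_monomials :: "int \<Rightarrow> monomial3 list \<Rightarrow> monomial3 list" where
  "scale_monomials s ms = map (\<lambda>(a, e). (s * a, e)) ms"

lemma eval_monomials_Nil [simp]: "eval_monomials [] x y z = 0"
  by (simp add: eval_monomials_def)

lemma eval_monomials_Cons [simp]:
  "eval_monomials (m # ms) x y z = eval_monomial m x y z + eval_monomials ms x y z"
  by (simp add: eval_monomials_def)

lemma eval_monomials_append [simp]:
  "eval_monomials (ms @ ns) x y z = eval_monomials ms x y z + eval_monomials ns x y z"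
  by (simp add: eval_monomials_def)

lemma eval_scale_monomials:
  "eval_monomials (scale_monomials s ms) x y z = of_int s * eval_monomials ms x y z"
  by (induction ms) (auto simp: scale_monomials_def algebra_simps)

lemma support_coeffs_of_monomials: "{e. coeffs_of_monomials ms e \<noteq> 0} \<subseteq> snd ` set ms"
  by (induction ms) (auto simp: coeffs_of_monomials_def split: if_splits)

lemma int_mpoly3_coeffs_of_monomials: "int_mpoly3 (coeffs_of_monomials ms)"
  unfolding int_mpoly3_def by (rule finite_subset[OF support_coeffs_of_monomials]) simp

lemma sum_coeffs_of_monomials:
  assumes "finite S" "snd ` set ms \<subseteq> S"
  shows "(\<Sum>e\<in>S. of_int (coeffs_of_monomials ms e) * x ^ fst e * y ^ fst (snd e) * z ^ snd (snd e))
         = eval_monomials ms x y z"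
  using assms(2)
proof (induction ms)
  case Nil
  then show ?case by (simp add: coeffs_of_monomials_def)
next
  case (Cons m ms)
  obtain a e where m: "m = (a, e)" by (cases m)
  have "e \<in> S" using Cons.prems m by auto
  have coeffs_Cons: "coeffs_of_monomials (m # ms) e' = (if e = e' then a else 0) + coeffs_of_monomials ms e'"
    for e' by (simp add: coeffs_of_monomials_def m)
  have "(\<Sum>e'\<in>S. of_int (coeffs_of_monomials (m # ms) e') * x ^ fst e' * y ^ fst (snd e') * z ^ snd (snd e'))
      = (\<Sum>e'\<in>S. if e = e' then of_int a * x ^ fst e' * y ^ fst (snd e') * z ^ snd (snd e') else 0)
        + (\<Sum>e'\<in>S. of_int (coeffs_of_monomials ms e') * x ^ fst e' * y ^ fst (snd e') * z ^ snd (snd e'))"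
    unfolding coeffs_Cons by (simp add: sum.distrib distrib_right) (rule sum.cong; auto)
  also have "\<dots> = eval_monomial m x y z + eval_monomials ms x y z"
    using Cons \<open>e \<in> S\<close> assms(1) by (cases e) (auto simp: m)
  finally show ?case by simp
qed

lemma eval_mpoly3_coeffs_of_monomials:
  "eval_mpoly3 (coeffs_of_monomials ms) x y z = eval_monomials ms x y z"
proof -
  have "eval_mpoly3 (coeffs_of_monomials ms) x y z =
    (\<Sum>e\<in>snd ` set ms. of_int (coeffs_of_monomials ms e) * x ^ fst e * y ^ fst (snd e) * z ^ snd (snd e))"
    unfolding eval_mpoly3_def
    by (rule sum.mono_neutral_left) (use support_coeffs_of_monomials in auto)
  also have "\<dots> = eval_monomials ms x y z"
    by (rule sum_coeffs_of_monomials) auto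
  finally show ?thesis .
qed

text \<open>The derivation \<open>D\<close> on a monomial; the truncated exponents \<open>i - 1\<close>, \<open>j - 1\<close> only
  occur with coefficient \<open>0\<close> when \<open>i = 0\<close> resp. \<open>j = 0\<close>.\<close>
fun monomial_deriv :: "monomial3 \<Rightarrow> monomial3 list" where
  "monomial_deriv (a, i, j, k) =
     [(a * int i, i - 1, j + 1, k), (6 * a * int j, i + 2, j - 1, k), (- a * int j, i, j - 1, k + 1)]"

definition monomials_deriv :: "monomial3 list \<Rightarrow> monomial3 list" where
  "monomials_deriv ms = concat (map monomial_deriv ms)"

lemma has_field_derivative_eval_monomial:
  assumes f: "(f has_field_derivative g w) (at w)"
    and g: "(g has_field_derivative 6 * (f w)\<^sup>2 - c) (at w)"
  shows "((\<lambda>w. eval_monomial m (f w) (g w) c) has_field_derivative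
           eval_monomials (monomial_deriv m) (f w) (g w) c) (at w)"
proof -
  obtain a i j k where m: "m = (a, i, j, k)" by (cases m)
  have D: "((\<lambda>w. of_int a * f w ^ i * g w ^ j * c ^ k) has_field_derivative
      of_int a * (of_nat i * f w ^ (i - 1) * g w) * g w ^ j * c ^ k +
      of_int a * f w ^ i * (of_nat j * g w ^ (j - 1) * (6 * (f w)\<^sup>2 - c)) * c ^ k) (at w)"
    by (auto intro!: derivative_eq_intros f g) (simp add: algebra_simps)
  have E: "of_int a * (of_nat i * f w ^ (i - 1) * g w) * g w ^ j * c ^ k +
      of_int a * f w ^ i * (of_nat j * g w ^ (j - 1) * (6 * (f w)\<^sup>2 - c)) * c ^ k
      = eval_monomials (monomial_deriv m) (f w) (g w) c"
    by (simp add: m algebra_simps power_add power2_eq_square)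
  show ?thesis using D unfolding E m eval_monomial.simps .
qed

lemma has_field_derivative_eval_monomials:
  assumes "(f has_field_derivative g w) (at w)"
    and "(g has_field_derivative 6 * (f w)\<^sup>2 - c) (at w)"
  shows "((\<lambda>w. eval_monomials ms (f w) (g w) c) has_field_derivative
           eval_monomials (monomials_deriv ms) (f w) (g w) c) (at w)"
proof (induction ms)
  case Nil
  then show ?case by (simp add: monomials_deriv_def)
next
  case (Cons m ms)
  then show ?case
    using DERIV_add[OF has_field_derivative_eval_monomial[OF assms] Cons.IH]
    by (simp add: monomials_deriv_def)
qed

definition wp_deriv_monomials :: "nat \<Rightarrow> monomial3 list" where
  "wp_deriv_monomials n = (monomials_deriv ^^ n) [(1, 1, 0, 0)]"

lemma holomorphic_power_series_order_2:
  fixes f :: "complex \<Rightarrow> complex"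
  assumes f: "f holomorphic_on ball 0 r" and u: "u \<in> ball 0 r"
    and "f 0 = 0" "deriv f 0 = 0"
  shows "(\<lambda>k. (deriv ^^ (k + 2)) f 0 * u ^ (k + 2) / fact (k + 2)) sums f u"
proof -
  have "(\<lambda>n. (deriv ^^ n) f 0 / fact n * (u - 0) ^ n) sums f u"
    by (rule holomorphic_power_series[OF f u])
  from sums_split_initial_segment[OF this, of 2] show ?thesis
    using assms(3,4) by (simp add: numeral_2_eq_2)
qed

locale sigma_function =
  fixes g2 g3 :: complex and \<sigma> :: "complex \<Rightarrow> complex"
  assumes weierstrass: "weierstrass_sigma g2 g3 \<sigma>"
begin

definition dom_wp :: "complex set" where
  "dom_wp = {u. \<sigma> u \<noteq> 0}"

lemma sigma_holomorphic: "\<sigma> holomorphic_on UNIV"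
  using weierstrass by (simp add: weierstrass_sigma_def)

lemma sigma_odd: "\<sigma> (- u) = - \<sigma> u"
  using weierstrass by (simp add: weierstrass_sigma_def)

lemma sigma_zero: "\<sigma> 0 = 0"
  using sigma_odd[of 0] by simp

lemma wp_ode: "u \<in> dom_wp \<Longrightarrow> (deriv (wp \<sigma>) u)\<^sup>2 = 4 * (wp \<sigma> u) ^ 3 - g2 * wp \<sigma> u - g3"
  using weierstrass by (simp add: weierstrass_sigma_def dom_wp_def)

lemma continuous_sigma: "continuous_on UNIV \<sigma>"
  using sigma_holomorphic holomorphic_on_imp_continuous_on by blast

lemma open_dom_wp: "open dom_wp"
  unfolding dom_wp_def using continuous_sigma by (rule open_Collect_neq) simp

lemma wzeta_holomorphic: "wzeta \<sigma> holomorphic_on dom_wp"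
proof -
  have "deriv \<sigma> holomorphic_on UNIV"
    using sigma_holomorphic by (intro holomorphic_deriv) auto
  then show ?thesis
    unfolding wzeta_def[abs_def] using open_dom_wp
    by (intro holomorphic_intros holomorphic_on_subset[OF sigma_holomorphic]) (auto simp: dom_wp_def)
qed

lemma wp_holomorphic: "wp \<sigma> holomorphic_on dom_wp"
  unfolding wp_def[abs_def] by (intro holomorphic_intros wzeta_holomorphic open_dom_wp)

lemma deriv_wp_holomorphic: "deriv (wp \<sigma>) holomorphic_on dom_wp"
  by (intro holomorphic_intros wp_holomorphic open_dom_wp)

lemma has_field_derivative_sigma: "(\<sigma> has_field_derivative deriv \<sigma> w) (at w)"
  using sigma_holomorphic holomorphic_derivI by blast

lemma has_field_derivative_wzeta: "w \<in> dom_wp \<Longrightarrow> (wzeta \<sigma> has_field_derivative - wp \<sigma> w) (at w)"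
  using holomorphic_derivI[OF wzeta_holomorphic open_dom_wp] by (simp add: wp_def)

lemma has_field_derivative_wp: "w \<in> dom_wp \<Longrightarrow> (wp \<sigma> has_field_derivative deriv (wp \<sigma>) w) (at w)"
  using holomorphic_derivI[OF wp_holomorphic open_dom_wp] by simp

lemma has_field_derivative_deriv_wp:
  "w \<in> dom_wp \<Longrightarrow> (deriv (wp \<sigma>) has_field_derivative deriv (deriv (wp \<sigma>)) w) (at w)"
  using holomorphic_derivI[OF deriv_wp_holomorphic open_dom_wp] by simp

lemma wp_ode_differentiated:
  assumes w: "w \<in> dom_wp"
  shows "2 * deriv (wp \<sigma>) w * deriv (deriv (wp \<sigma>)) w = (12 * (wp \<sigma> w)\<^sup>2 - g2) * deriv (wp \<sigma>) w"
proof -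
  have lhs: "((\<lambda>x. (deriv (wp \<sigma>) x)\<^sup>2) has_field_derivative
      2 * deriv (wp \<sigma>) w * deriv (deriv (wp \<sigma>)) w) (at w)"
    by (auto intro!: derivative_eq_intros has_field_derivative_deriv_wp[OF w])
  have "((\<lambda>x. 4 * (wp \<sigma> x) ^ 3 - g2 * wp \<sigma> x - g3) has_field_derivative
      (12 * (wp \<sigma> w)\<^sup>2 - g2) * deriv (wp \<sigma>) w) (at w)"
    by (auto intro!: derivative_eq_intros has_field_derivative_wp[OF w]
        simp: algebra_simps power2_eq_square)
  then have rhs: "((\<lambda>x. (deriv (wp \<sigma>) x)\<^sup>2) has_field_derivative
      (12 * (wp \<sigma> w)\<^sup>2 - g2) * deriv (wp \<sigma>) w) (at w)"
    using has_field_derivative_transform_within_open[OF _ open_dom_wp w] wp_ode by simp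
  show ?thesis using DERIV_unique[OF lhs rhs] .
qed

text \<open>If \<open>\<wp> = c\<close> near \<open>w\<close>, then \<open>\<zeta>(x) + c x = d\<close> there, so \<open>\<sigma>' = (d - c x) \<sigma>\<close> on all
  of \<open>\<complex>\<close> by analytic continuation, and \<open>\<sigma>(x) exp(c x\<^sup>2/2 - d x)\<close> is constant; it
  vanishes at \<open>0\<close>, contradicting \<open>\<sigma> w \<noteq> 0\<close>.\<close>
lemma wp_not_locally_constant:
  assumes e: "0 < e" and ball: "ball w e \<subseteq> dom_wp" and const: "\<And>x. x \<in> ball w e \<Longrightarrow> wp \<sigma> x = c"
  shows False
proof -
  have "\<exists>d. \<forall>x\<in>ball w e. wzeta \<sigma> x + c * x = d"
  proof (rule has_field_derivative_zero_constant)
    fix x assume x: "x \<in> ball w e"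
    have "((\<lambda>x. wzeta \<sigma> x + c * x) has_field_derivative - wp \<sigma> x + c) (at x)"
      using ball x by (auto intro!: derivative_eq_intros has_field_derivative_wzeta)
    then show "((\<lambda>x. wzeta \<sigma> x + c * x) has_field_derivative 0) (at x within ball w e)"
      using const[OF x] by (auto intro: has_field_derivative_at_within)
  qed auto
  then obtain d where d: "\<And>x. x \<in> ball w e \<Longrightarrow> wzeta \<sigma> x + c * x = d" by blast
  have linear_ode: "deriv \<sigma> x - (d - c * x) * \<sigma> x = 0" for x
  proof (rule analytic_continuation[where S = UNIV and U = "ball w e" and \<xi> = w and w = x
        and f = "\<lambda>x. deriv \<sigma> x - (d - c * x) * \<sigma> x"])
    show "(\<lambda>x. deriv \<sigma> x - (d - c * x) * \<sigma> x) holomorphic_on UNIV"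
      by (intro holomorphic_intros sigma_holomorphic) auto
    show "w islimpt ball w e" using e by (simp add: islimpt_ball)
    fix z assume z: "z \<in> ball w e"
    then have "\<sigma> z \<noteq> 0" using ball by (auto simp: dom_wp_def)
    moreover have "deriv \<sigma> z / \<sigma> z = d - c * z"
      using d[OF z] by (simp add: wzeta_def algebra_simps)
    ultimately show "deriv \<sigma> z - (d - c * z) * \<sigma> z = 0" by (simp add: field_simps)
  qed auto
  have "\<exists>K. \<forall>x\<in>UNIV. \<sigma> x * exp (c * x\<^sup>2 / 2 - d * x) = K"
  proof (rule has_field_derivative_zero_constant)
    fix x :: complex
    have "((\<lambda>x. \<sigma> x * exp (c * x\<^sup>2 / 2 - d * x)) has_field_derivative
        (deriv \<sigma> x - (d - c * x) * \<sigma> x) * exp (c * x\<^sup>2 / 2 - d * x)) (at x)"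
      by (auto intro!: derivative_eq_intros has_field_derivative_sigma
          simp: algebra_simps power2_eq_square)
    then show "((\<lambda>x. \<sigma> x * exp (c * x\<^sup>2 / 2 - d * x)) has_field_derivative 0) (at x within UNIV)"
      using linear_ode[of x] by simp
  qed auto
  then obtain K where K: "\<And>x. \<sigma> x * exp (c * x\<^sup>2 / 2 - d * x) = K" by blast
  have "\<sigma> w = 0" using K[of 0] K[of w] sigma_zero by simp
  moreover have "w \<in> dom_wp" using ball e by auto
  ultimately show False by (simp add: dom_wp_def)
qed

text \<open>Cancelling \<open>\<wp>'\<close> in the differentiated equation needs \<open>\<wp>' \<noteq> 0\<close>: where the claimed
  identity fails, \<open>\<wp>'\<close> vanishes on a whole ball, which \<open>wp_not_locally_constant\<close> excludes.\<close>
lemma deriv2_wp: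
  assumes w: "w \<in> dom_wp"
  shows "deriv (deriv (wp \<sigma>)) w = 6 * (wp \<sigma> w)\<^sup>2 - g2 / 2"
proof (rule ccontr)
  define h where "h x = deriv (deriv (wp \<sigma>)) x - (6 * (wp \<sigma> x)\<^sup>2 - g2 / 2)" for x
  assume "\<not> ?thesis"
  then have "h w \<noteq> 0" by (simp add: h_def)
  have "h holomorphic_on dom_wp"
    unfolding h_def[abs_def] by (intro holomorphic_intros deriv_wp_holomorphic wp_holomorphic open_dom_wp)
  then have "isCont h w"
    using holomorphic_on_imp_continuous_on continuous_on_eq_continuous_at[OF open_dom_wp] w by blast
  then obtain e1 where e1: "e1 > 0" "\<And>y. dist w y < e1 \<Longrightarrow> h y \<noteq> 0"
    using continuous_at_avoid[of w h 0] \<open>h w \<noteq> 0\<close> by blast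
  obtain e2 where e2: "e2 > 0" "ball w e2 \<subseteq> dom_wp" using open_dom_wp w openE by blast
  define e where "e = min e1 e2"
  have ball: "ball w e \<subseteq> dom_wp" and h_nonzero: "\<And>x. x \<in> ball w e \<Longrightarrow> h x \<noteq> 0"
    using e1 e2 by (auto simp: e_def)
  have wp'_zero: "deriv (wp \<sigma>) x = 0" if x: "x \<in> ball w e" for x
  proof -
    have "x \<in> dom_wp" using ball x by auto
    then have "2 * deriv (wp \<sigma>) x * h x = 0"
      using wp_ode_differentiated[of x] by (simp add: h_def algebra_simps)
    then show ?thesis using h_nonzero[OF x] by simp
  qed
  have "\<exists>c. \<forall>x\<in>ball w e. wp \<sigma> x = c"
  proof (rule has_field_derivative_zero_constant)
    fix x assume x: "x \<in> ball w e"
    with ball have "(wp \<sigma> has_field_derivative deriv (wp \<sigma>) x) (at x)"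
      by (intro has_field_derivative_wp) auto
    then show "(wp \<sigma> has_field_derivative 0) (at x within ball w e)"
      using wp'_zero[OF x] by (simp add: has_field_derivative_at_within)
  qed auto
  then obtain c where "\<And>x. x \<in> ball w e \<Longrightarrow> wp \<sigma> x = c" by blast
  moreover have "e > 0" using e1 e2 by (simp add: e_def)
  ultimately show False using wp_not_locally_constant ball by blast
qed

lemma higher_deriv_wp:
  "w \<in> dom_wp \<Longrightarrow>
   (deriv ^^ n) (wp \<sigma>) w = eval_monomials (wp_deriv_monomials n) (wp \<sigma> w) (deriv (wp \<sigma>) w) (g2 / 2)"
proof (induction n arbitrary: w)
  case 0
  then show ?case by (simp add: wp_deriv_monomials_def)
next
  case (Suc n)
  have "((\<lambda>w. eval_monomials (wp_deriv_monomials n) (wp \<sigma> w) (deriv (wp \<sigma>) w) (g2 / 2))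
      has_field_derivative eval_monomials (wp_deriv_monomials (Suc n)) (wp \<sigma> w) (deriv (wp \<sigma>) w) (g2 / 2))
      (at w)"
    using has_field_derivative_eval_monomials[OF has_field_derivative_wp[OF Suc.prems]
        has_field_derivative_deriv_wp[OF Suc.prems, unfolded deriv2_wp[OF Suc.prems]]]
    by (simp add: wp_deriv_monomials_def)
  then have "((deriv ^^ n) (wp \<sigma>) has_field_derivative
      eval_monomials (wp_deriv_monomials (Suc n)) (wp \<sigma> w) (deriv (wp \<sigma>) w) (g2 / 2)) (at w)"
    using has_field_derivative_transform_within_open[OF _ open_dom_wp Suc.prems] Suc.IH by simp
  then show ?case by (simp add: DERIV_imp_deriv)
qed

lemma wpsi_branch_neighbourhood:
  assumes v: "\<sigma> v \<noteq> 0"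
  obtains r where "r > 0" "\<And>u. u \<in> ball 0 r \<Longrightarrow> \<sigma> (v - u) / \<sigma> v \<notin> \<real>\<^sub>\<le>\<^sub>0"
proof -
  define F where "F u = \<sigma> (v - u) / \<sigma> v" for u
  have "continuous_on UNIV F"
    unfolding F_def[abs_def]
    using v by (intro continuous_intros continuous_on_compose2[OF continuous_sigma]) auto
  then have "open (F -` (- \<real>\<^sub>\<le>\<^sub>0))"
    by (intro continuous_open_vimage) (auto simp: continuous_on_eq_continuous_at)
  moreover have "0 \<in> F -` (- \<real>\<^sub>\<le>\<^sub>0)"
    using v by (simp add: F_def)
  ultimately obtain r where r: "r > 0" and "ball 0 r \<subseteq> F -` (- \<real>\<^sub>\<le>\<^sub>0)"
    using openE by blast
  then show ?thesis
    by (intro that[OF r]) (auto simp: F_def)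
qed

lemma has_field_derivative_wpsi:
  assumes v: "\<sigma> v \<noteq> 0" and branch: "\<sigma> (v - u) / \<sigma> v \<notin> \<real>\<^sub>\<le>\<^sub>0"
  shows "((\<lambda>u. wpsi \<sigma> u v) has_field_derivative wzeta \<sigma> (v - u) - wzeta \<sigma> v) (at u)"
proof -
  have "((\<lambda>u. \<sigma> (v - u)) has_field_derivative deriv \<sigma> (v - u) * (-1)) (at u)"
    by (rule DERIV_chain2[OF has_field_derivative_sigma]) (auto intro!: derivative_eq_intros)
  then have "((\<lambda>u. \<sigma> (v - u) / \<sigma> v) has_field_derivative - deriv \<sigma> (v - u) / \<sigma> v) (at u)"
    using v by (auto intro!: derivative_eq_intros)
  from DERIV_chain2[where g = "\<lambda>u. \<sigma> (v - u) / \<sigma> v", OF has_field_derivative_Ln[OF branch] this]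
  have "((\<lambda>u. wpsi \<sigma> u v) has_field_derivative
      - (inverse (\<sigma> (v - u) / \<sigma> v) * (- deriv \<sigma> (v - u) / \<sigma> v)) - wzeta \<sigma> v) (at u)"
    unfolding wpsi_def by (rule DERIV_diff[OF DERIV_minus]) (auto intro!: derivative_eq_intros)
  moreover have "\<sigma> (v - u) \<noteq> 0"
    using branch by auto
  ultimately show ?thesis
    using v by (simp add: wzeta_def field_simps)
qed

lemma wpsi_expansion:
  assumes v: "\<sigma> v \<noteq> 0"
  shows "\<forall>\<^sub>F u in nhds 0.
    (\<lambda>k. (-1) ^ k * (deriv ^^ k) (wp \<sigma>) v * u ^ (k + 2) / fact (k + 2)) sums wpsi \<sigma> u v"
proof -
  obtain r where r: "r > 0" and branch: "\<And>u. u \<in> ball 0 r \<Longrightarrow> \<sigma> (v - u) / \<sigma> v \<notin> \<real>\<^sub>\<le>\<^sub>0"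
    using wpsi_branch_neighbourhood[OF v] by blast
  define \<psi> where "\<psi> u = wpsi \<sigma> u v" for u
  have reflected: "v - u \<in> dom_wp" if "u \<in> ball 0 r" for u
    using branch[OF that] by (auto simp: dom_wp_def)
  have d\<psi>: "(\<psi> has_field_derivative wzeta \<sigma> (v - u) - wzeta \<sigma> v) (at u)" if "u \<in> ball 0 r" for u
    unfolding \<psi>_def[abs_def] using has_field_derivative_wpsi[OF v branch[OF that]] .
  then have hol\<psi>: "\<psi> holomorphic_on ball 0 r"
    unfolding holomorphic_on_open[OF open_ball] by blast
  have \<psi>_0: "\<psi> 0 = 0"
    using v by (simp add: \<psi>_def wpsi_def)
  have deriv_\<psi>_0: "deriv \<psi> 0 = 0"
    using DERIV_imp_deriv[OF d\<psi>] r by simp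
  have deriv2_\<psi>: "deriv (deriv \<psi>) u = wp \<sigma> (- 1 * u + v)" if u: "u \<in> ball 0 r" for u
  proof -
    have "((\<lambda>u. wzeta \<sigma> (v - u) - wzeta \<sigma> v) has_field_derivative - wp \<sigma> (v - u) * (-1) - 0) (at u)"
      by (intro derivative_intros DERIV_chain2[where g = "\<lambda>u. v - u" and x = u,
          OF has_field_derivative_wzeta[OF reflected[OF u]]]) (auto intro!: derivative_eq_intros)
    then have "(deriv \<psi> has_field_derivative wp \<sigma> (v - u)) (at u)"
      using has_field_derivative_transform_within_open[OF _ open_ball u] DERIV_imp_deriv[OF d\<psi>]
      by simp
    then show ?thesis by (simp add: DERIV_imp_deriv)
  qed
  have higher_deriv_\<psi>_0: "(deriv ^^ (k + 2)) \<psi> 0 = (-1) ^ k * (deriv ^^ k) (wp \<sigma>) v" for k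
  proof -
    have "(deriv ^^ (k + 2)) \<psi> 0 = (deriv ^^ k) (deriv (deriv \<psi>)) 0"
      by (simp only: funpow_add o_def) (simp add: numeral_2_eq_2)
    also have "\<dots> = (deriv ^^ k) (\<lambda>u. wp \<sigma> (- 1 * u + v)) 0"
    proof (rule higher_deriv_transform_within_open[OF _ _ open_ball])
      show "deriv (deriv \<psi>) holomorphic_on ball 0 r"
        by (intro holomorphic_deriv open_ball hol\<psi>)
      then show "(\<lambda>u. wp \<sigma> (- 1 * u + v)) holomorphic_on ball 0 r"
        by (rule holomorphic_transform) (simp add: deriv2_\<psi>)
    qed (use r deriv2_\<psi> in auto)
    also have "\<dots> = (-1) ^ k * (deriv ^^ k) (wp \<sigma>) (- 1 * 0 + v)"
      by (rule higher_deriv_compose_linear'[OF wp_holomorphic open_ball[of 0 r] open_dom_wp])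
        (use r reflected in auto)
    finally show ?thesis by simp
  qed
  show ?thesis
    using eventually_nhds_ball[OF r, of 0]
  proof (rule eventually_mono)
    fix u :: complex assume "u \<in> ball 0 r"
    then have "(\<lambda>k. (deriv ^^ (k + 2)) \<psi> 0 * u ^ (k + 2) / fact (k + 2)) sums \<psi> u"
      using hol\<psi> \<psi>_0 deriv_\<psi>_0 by (intro holomorphic_power_series_order_2)
    then show "(\<lambda>k. (-1) ^ k * (deriv ^^ k) (wp \<sigma>) v * u ^ (k + 2) / fact (k + 2)) sums wpsi \<sigma> u v"
      by (simp only: higher_deriv_\<psi>_0 \<psi>_def)
  qed
qed

end

text \<open>Only the values at \<open>n \<ge> 2\<close> enter the expansion.\<close>
definition wpsi_poly :: "nat \<Rightarrow> nat \<times> nat \<times> nat \<Rightarrow> int" where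
  "wpsi_poly n = coeffs_of_monomials (scale_monomials ((-1) ^ (n - 2)) (wp_deriv_monomials (n - 2)))"

theorem mainTheorem10:
  shows "\<exists>P :: nat \<Rightarrow> (nat \<times> nat \<times> nat \<Rightarrow> int).
     (\<forall>k. int_mpoly3 (P k)) \<and>
     (\<forall>g2 g3 \<sigma> v. weierstrass_sigma g2 g3 \<sigma> \<and> \<sigma> v \<noteq> 0 \<longrightarrow>
        (\<forall>\<^sub>F u in nhds 0.
           (\<lambda>k. eval_mpoly3 (P (k + 2)) (wp \<sigma> v) (deriv (wp \<sigma>) v) (g2 / 2)
                  * u ^ (k + 2) / fact (k + 2)) sums wpsi \<sigma> u v))"
proof (intro exI[of _ wpsi_poly] conjI allI impI)
  show "int_mpoly3 (wpsi_poly k)" for k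
    by (simp add: wpsi_poly_def int_mpoly3_coeffs_of_monomials)
  fix g2 g3 \<sigma> v
  assume hyps: "weierstrass_sigma g2 g3 \<sigma> \<and> \<sigma> v \<noteq> 0"
  then interpret sigma_function g2 g3 \<sigma>
    by unfold_locales simp
  have v: "\<sigma> v \<noteq> 0"
    using hyps by simp
  have "eval_mpoly3 (wpsi_poly (k + 2)) (wp \<sigma> v) (deriv (wp \<sigma>) v) (g2 / 2)
      = (-1) ^ k * (deriv ^^ k) (wp \<sigma>) v" for k
    using higher_deriv_wp[of v k] v
    by (simp add: wpsi_poly_def eval_mpoly3_coeffs_of_monomials eval_scale_monomials dom_wp_def)
  then show "\<forall>\<^sub>F u in nhds 0.
      (\<lambda>k. eval_mpoly3 (wpsi_poly (k + 2)) (wp \<sigma> v) (deriv (wp \<sigma>) v) (g2 / 2)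
             * u ^ (k + 2) / fact (k + 2)) sums wpsi \<sigma> u v"
    using wpsi_expansion[OF v] by simp
qed

end
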